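(* Let $\phi,\psi$ be propositional team formulas (built from literals, $\bot$, $NE$, dependence, inclusion and independence atoms over classical propositional formulas, using $\wedge,\otimes,\vee,\circledast$). Suppose $\phi$ is union closed, $\psi$ is local, $\phi\models\psi$, and $p\notin\mathcal L(\psi)$. Then $\phi[p|\top]\otimes\phi[p|\bot]\models\psi$.
   Context: $Prop$ is a nonempty set of propositional letters; a team is a set of valuations $s:Prop\to\{0,1\}$. Semantics: $X\models\bot$ iff $X=\emptyset$; $X\models p$ (resp. $\neg p$) iff $s(p)=1$ (resp. $0$) for all $s\in X$; $X\models NE$ iff $X\neq\emptyset$; $\wedge$ and $\vee$ classical on teams; $X\models\phi_1\otimes\phi_2$ iff $X=X_1\cup X_2$ for some $X_1\models\phi_1$, $X_2\models\phi_2$; $X\models\phi_1\circledast\phi_2$ iff $X=\emptyset$ or $X=X_1\cup X_2$ with $X_1,X_2$ nonempty, $X_1\models\phi_1$, $X_2\models\phi_2$. With $s(\alpha)$ the classical truth value of a classical formula $\alpha$: $X\models{=}(\overline\alpha,\beta)$ iff $\forall s,s'\in X$ ($s(\overline\alpha)=s'(\overline\alpha)\Rightarrow s(\beta)=s'(\beta)$); $X\models\overline\alpha\subseteq\overline\alpha'$ iff $\forall s\in X\,\exists s'\in X$ $s(\overline\alpha)=s'(\overline\alpha')$; $X\models\overline\alpha\perp\overline\beta$ iff $\forall s,s'\in X\,\exists s''\in X$ with $s''(\overline\alpha)=s(\overline\alpha)$, $s''(\overline\beta)=s'(\overline\beta)$. $\top$ is $q\otimes\neg q$. $\phi[p|\top]$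 is defined inductively by $p\mapsto\top$, $\neg p\mapsto\bot$, $\bot\mapsto\bot$, other literals and $NE$ unchanged, commuting with connectives, classical substitution inside atoms; $\phi[p|\bot]$ analogously with $p\mapsto\bot$, $\neg p\mapsto\top$. $\mathcal L(\phi)$ is the finite set of letters occurring in $\phi$. $\phi$ is union closed if $X_1\models\phi$ and $X_2\models\phi$ imply $X_1\cup X_2\models\phi$. For a set $L$ of letters, $Y=_L X$ means: for every $s\in Y$ there is $s'\in X$ agreeing with $s$ on all letters of $L$, and for every $s\in X$ there is $s'\in Y$ agreeing with $s$ on $L$. $\psi$ is local if $X\models\psi$ and $Y=_{\mathcal L(\psi)}X$ imply $Y\models\psi$. *)

theory Defs
  imports Main
begin

text \<open>Letters are elements of a type 'p (the set Prop is UNIV :: 'p set, nonempty since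
  HOL types are nonempty). A valuation is a function 'p => bool, a team a set of valuations.\<close>

type_synonym 'p valuation = "'p \<Rightarrow> bool"
type_synonym 'p team = "'p valuation set"

datatype 'p cform =
    CVar 'p
  | CTrue
  | CFalse
  | CNeg "'p cform"
  | CConj "'p cform" "'p cform"
  | CDisj "'p cform" "'p cform"

primrec cval :: "'p valuation \<Rightarrow> 'p cform \<Rightarrow> bool" where
  "cval s (CVar q) = s q"
| "cval s CTrue = True"
| "cval s CFalse = False"
| "cval s (CNeg a) = (\<not> cval s a)"
| "cval s (CConj a b) = (cval s a \<and> cval s b)"
| "cval s (CDisj a b) = (cval s a \<or> cval s b)"

primrec cletters :: "'p cform \<Rightarrow> 'p set" where
  "cletters (CVar q) = {q}"
| "cletters CTrue = {}"
| "cletters CFalse = {}"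
| "cletters (CNeg a) = cletters a"
| "cletters (CConj a b) = cletters a \<union> cletters b"
| "cletters (CDisj a b) = cletters a \<union> cletters b"

primrec csubst :: "'p \<Rightarrow> 'p cform \<Rightarrow> 'p cform \<Rightarrow> 'p cform" where
  "csubst p c (CVar q) = (if q = p then c else CVar q)"
| "csubst p c CTrue = CTrue"
| "csubst p c CFalse = CFalse"
| "csubst p c (CNeg a) = CNeg (csubst p c a)"
| "csubst p c (CConj a b) = CConj (csubst p c a) (csubst p c b)"
| "csubst p c (CDisj a b) = CDisj (csubst p c a) (csubst p c b)"

text \<open>Team formulas. Inclusion atoms are given as a list of pairs (alpha_i, alpha'_i),
  so that both tuples have the same length.\<close>
datatype 'p tform =
    Pos 'p
  | Neg 'p
  | Bot
  | NE
  | Dep "'p cform list" "'p cform"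
  | Inc "('p cform \<times> 'p cform) list"
  | Ind "'p cform list" "'p cform list"
  | TAnd "'p tform" "'p tform"
  | TOr "'p tform" "'p tform"
  | Tensor "'p tform" "'p tform"
  | Circ "'p tform" "'p tform"

definition cvals :: "'p valuation \<Rightarrow> 'p cform list \<Rightarrow> bool list" where
  "cvals s as = map (cval s) as"

fun sat :: "'p team \<Rightarrow> 'p tform \<Rightarrow> bool" where
  "sat X (Pos q) = (\<forall>s\<in>X. s q)"
| "sat X (Neg q) = (\<forall>s\<in>X. \<not> s q)"
| "sat X Bot = (X = {})"
| "sat X NE = (X \<noteq> {})"
| "sat X (Dep as b) = (\<forall>s\<in>X. \<forall>s'\<in>X. cvals s as = cvals s' as \<longrightarrow> cval s b = cval s' b)"
| "sat X (Inc ps) = (\<forall>s\<in>X. \<exists>s'\<in>X. cvals s (map fst ps) = cvals s' (map snd ps))"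
| "sat X (Ind as bs) = (\<forall>s\<in>X. \<forall>s'\<in>X. \<exists>s''\<in>X.
      cvals s'' as = cvals s as \<and> cvals s'' bs = cvals s' bs)"
| "sat X (TAnd f g) = (sat X f \<and> sat X g)"
| "sat X (TOr f g) = (sat X f \<or> sat X g)"
| "sat X (Tensor f g) = (\<exists>X1 X2. X = X1 \<union> X2 \<and> sat X1 f \<and> sat X2 g)"
| "sat X (Circ f g) = (X = {} \<or>
      (\<exists>X1 X2. X = X1 \<union> X2 \<and> X1 \<noteq> {} \<and> X2 \<noteq> {} \<and> sat X1 f \<and> sat X2 g))"

fun letters :: "'p tform \<Rightarrow> 'p set" where
  "letters (Pos q) = {q}"
| "letters (Neg q) = {q}"
| "letters Bot = {}"
| "letters NE = {}"
| "letters (Dep as b) = \<Union>(cletters ` set as) \<union> cletters b"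
| "letters (Inc ps) = \<Union>(cletters ` fst ` set ps) \<union> \<Union>(cletters ` snd ` set ps)"
| "letters (Ind as bs) = \<Union>(cletters ` set as) \<union> \<Union>(cletters ` set bs)"
| "letters (TAnd f g) = letters f \<union> letters g"
| "letters (TOr f g) = letters f \<union> letters g"
| "letters (Tensor f g) = letters f \<union> letters g"
| "letters (Circ f g) = letters f \<union> letters g"

text \<open>Top is q (tensor) not q; we take q := the substituted letter p itself.\<close>
definition ttop :: "'p \<Rightarrow> 'p tform" where
  "ttop q = Tensor (Pos q) (Neg q)"

text \<open>subst p b f: b = True gives f[p|top], b = False gives f[p|bot].\<close>
fun subst :: "'p \<Rightarrow> bool \<Rightarrow> 'p tform \<Rightarrow> 'p tform" where
  "subst p b (Pos q) = (if q = p then (if b then ttop p else Bot) else Pos q)"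
| "subst p b (Neg q) = (if q = p then (if b then Bot else ttop p) else Neg q)"
| "subst p b Bot = Bot"
| "subst p b NE = NE"
| "subst p b (Dep as c) =
     Dep (map (csubst p (if b then CTrue else CFalse)) as) (csubst p (if b then CTrue else CFalse) c)"
| "subst p b (Inc ps) =
     Inc (map (\<lambda>(a, a'). (csubst p (if b then CTrue else CFalse) a,
                          csubst p (if b then CTrue else CFalse) a')) ps)"
| "subst p b (Ind as bs) =
     Ind (map (csubst p (if b then CTrue else CFalse)) as) (map (csubst p (if b then CTrue else CFalse)) bs)"
| "subst p b (TAnd f g) = TAnd (subst p b f) (subst p b g)"
| "subst p b (TOr f g) = TOr (subst p b f) (subst p b g)"
| "subst p b (Tensor f g) = Tensor (subst p b f) (subst p b g)"
| "subst p b (Circ f g) = Circ (subst p b f) (subst p b g)"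

definition entails :: "'p tform \<Rightarrow> 'p tform \<Rightarrow> bool" where
  "entails f g = (\<forall>X. sat X f \<longrightarrow> sat X g)"

definition union_closed :: "'p tform \<Rightarrow> bool" where
  "union_closed f = (\<forall>X1 X2. sat X1 f \<longrightarrow> sat X2 f \<longrightarrow> sat (X1 \<union> X2) f)"

definition agree_on :: "'p set \<Rightarrow> 'p team \<Rightarrow> 'p team \<Rightarrow> bool" where
  "agree_on L Y X = ((\<forall>s\<in>Y. \<exists>s'\<in>X. \<forall>q\<in>L. s q = s' q) \<and>
                     (\<forall>s\<in>X. \<exists>s'\<in>Y. \<forall>q\<in>L. s q = s' q))"

definition local_formula :: "'p tform \<Rightarrow> bool" where
  "local_formula f = (\<forall>X Y. sat X f \<longrightarrow> agree_on (letters f) Y X \<longrightarrow> sat Y f)"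

end

theory Submission
  imports Defs
begin

text \<open>Write X[p:=b] for the team obtained from X by setting p to b in every valuation.
  Substitution commutes with satisfaction: X satisfies phi[p|top] iff X[p:=1] satisfies phi,
  and likewise for bot with X[p:=0]. Given a split X = X1 \<union> X2 witnessing the tensor, union
  closure yields that X1[p:=1] \<union> X2[p:=0] satisfies phi, hence psi. This team agrees with X on
  every letter other than p, so locality of psi transfers psi to X.\<close>

lemma cval_csubst:
  "cval s (csubst p (if b then CTrue else CFalse) a) = cval (s(p := b)) a"
  by (induction a) auto

lemma cvals_csubst:
  "cvals s (map (csubst p (if b then CTrue else CFalse)) as) = cvals (s(p := b)) as"
  by (simp add: cvals_def cval_csubst)

lemma image_eq_UnE:
  assumes "h ` X = Y1 \<union> Y2"
  obtains X1 X2 where "X = X1 \<union> X2" "h ` X1 = Y1" "h ` X2 = Y2"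
proof
  show "X = {x \<in> X. h x \<in> Y1} \<union> {x \<in> X. h x \<in> Y2}"
    using assms by auto
  show "h ` {x \<in> X. h x \<in> Y1} = Y1" "h ` {x \<in> X. h x \<in> Y2} = Y2"
    using assms by auto
qed

lemma ex_Un_image_iff:
  "(\<exists>Y1 Y2. h ` X = Y1 \<union> Y2 \<and> R Y1 Y2) \<longleftrightarrow>
   (\<exists>X1 X2. X = X1 \<union> X2 \<and> R (h ` X1) (h ` X2))"
  by (metis image_Un image_eq_UnE)

lemma sat_ttop: "sat X (ttop q)"
  unfolding ttop_def sat.simps
  by (rule exI[of _ "{s \<in> X. s q}"], rule exI[of _ "{s \<in> X. \<not> s q}"]) auto

lemma sat_subst: "sat X (subst p b f) = sat ((\<lambda>s. s(p := b)) ` X) f"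
proof (induction f arbitrary: X)
  case (Tensor f g)
  then show ?case
    using ex_Un_image_iff[of "\<lambda>s. s(p := b)" X "\<lambda>Y1 Y2. sat Y1 f \<and> sat Y2 g"]
    by (simp only: sat.simps subst.simps)
next
  case (Circ f g)
  then show ?case
    using ex_Un_image_iff[of "\<lambda>s. s(p := b)" X
        "\<lambda>Y1 Y2. Y1 \<noteq> {} \<and> Y2 \<noteq> {} \<and> sat Y1 f \<and> sat Y2 g"]
    by (simp only: sat.simps subst.simps image_is_empty)
next
  case (Inc ps)
  have map_pairs: "map fst (map (\<lambda>(a, a'). (c a, c a')) ps) = map c (map fst ps)"
    "map snd (map (\<lambda>(a, a'). (c a, c a')) ps) = map c (map snd ps)"
    for c by (induction ps) auto
  show ?case by (simp only: sat.simps subst.simps map_pairs cvals_csubst ball_simps bex_simps)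
qed (simp_all add: sat_ttop cval_csubst cvals_csubst)

lemma agree_on_Un:
  assumes "agree_on L X1 Y1" and "agree_on L X2 Y2"
  shows "agree_on L (X1 \<union> X2) (Y1 \<union> Y2)"
  using assms unfolding agree_on_def Ball_def Bex_def Un_iff by meson

lemma agree_on_image_fun_upd:
  assumes "p \<notin> L"
  shows "agree_on L X ((\<lambda>s. s(p := b)) ` X)"
  using assms unfolding agree_on_def by auto

theorem mainTheorem2:
  fixes phi psi :: "'p tform" and p :: 'p
  assumes "union_closed phi"
    and "local_formula psi"
    and "entails phi psi"
    and "p \<notin> letters psi"
  shows "entails (Tensor (subst p True phi) (subst p False phi)) psi"
  unfolding entails_def
proof (intro allI impI)
  fix X assume "sat X (Tensor (subst p True phi) (subst p False phi))"
  then obtain X1 X2 where X: "X = X1 \<union> X2"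
    and X1: "sat ((\<lambda>s. s(p := True)) ` X1) phi" and X2: "sat ((\<lambda>s. s(p := False)) ` X2) phi"
    by (auto simp: sat_subst)
  let ?Y = "(\<lambda>s. s(p := True)) ` X1 \<union> (\<lambda>s. s(p := False)) ` X2"
  have "sat ?Y psi"
    using X1 X2 assms(1,3) unfolding union_closed_def entails_def by blast
  moreover have "agree_on (letters psi) X ?Y"
    unfolding X using assms(4) by (intro agree_on_Un agree_on_image_fun_upd)
  ultimately show "sat X psi"
    using assms(2) unfolding local_formula_def by blast
qed

end
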